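(* Let $\lambda:[0,\infty)\to\mathbb C$ be locally integrable and $R:[0,\infty)\to\mathbb C^{2\times2}$ with $\int_0^\infty\|R(t)\|dt<\infty$, and consider the system $$u_1'(x)=\Big[\begin{pmatrix}\lambda(x)&0\\0&-\lambda(x)\end{pmatrix}+R(x)\Big]u_1(x),\quad x\ge0.$$ Assume there is a constant $M$ such that $\int_x^y\operatorname{Re}\lambda(t)dt\ge-M$ for all $0\le x\le y$. Then every solution $u_1$ satisfies, for all $x\ge0$, $$\|u_1(x)\|\le\|u_1(0)\|\,e^{\int_0^x\operatorname{Re}\lambda(t)dt}\sqrt{1+e^{4M}}\,e^{\sqrt{1+e^{4M}}\int_0^\infty\|R(t)\|dt}.$$
   Context: $\|\cdot\|$ denotes the Euclidean norm on $\mathbb C^2$ and the corresponding operator norm on $2\times2$ matrices. *)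

theory Defs
  imports "HOL-Analysis.Analysis"
begin

definition diag_pm :: "complex \<Rightarrow> complex^2^2" where
  "diag_pm l = (\<chi> i j. if i = j then (if i = 1 then l else - l) else 0)"

definition opnorm :: "complex^2^2 \<Rightarrow> real" where
  "opnorm A = onorm (\<lambda>v. A *v v)"

end

theory Submission
  imports Defs
begin

text \<open>Multiplying the two components by the integrating factors \<open>exp (\<mp>\<integral>\<lambda>)\<close> removes the
  diagonal part, so with \<open>\<phi> t = exp (- \<integral>\<^sub>0\<^sup>t Re \<lambda>) \<parallel>u t\<parallel>\<close> the first component of \<open>\<phi>\<close> is
  bounded by \<open>\<parallel>u 0\<parallel> + \<integral>\<^sub>0\<^sup>y \<parallel>R\<parallel> \<phi>\<close>. For the second component the integrating factor runs
  backwards, and the hypothesis \<open>\<integral>\<^sub>x\<^sup>y Re \<lambda> \<ge> -M\<close> costs a factor \<open>exp (2 M)\<close>. Hence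
  \<open>\<phi> \<le> \<surd>(1 + exp (4 M)) (\<parallel>u 0\<parallel> + \<integral>\<parallel>R\<parallel> \<phi>)\<close>, and Gronwall's inequality finishes the proof.
  Solutions are only absolutely continuous, so the product rule and the chain rule for \<open>exp\<close>
  are proved directly for indefinite integrals.\<close>

lemma norm_increment_le_integral_if_local:
  fixes Q :: "real \<Rightarrow> 'a::real_normed_vector" and w :: "real \<Rightarrow> real"
  assumes ab: "a \<le> b" and w: "w integrable_on {a..b}" and d: "d > 0"
    and local: "\<And>s t. a \<le> s \<Longrightarrow> s \<le> t \<Longrightarrow> t \<le> b \<Longrightarrow> t - s < d
                  \<Longrightarrow> norm (Q t - Q s) \<le> c * integral {s..t} w"
  shows "norm (Q b - Q a) \<le> c * integral {a..b} w"
proof -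
  obtain n :: nat where n: "(b - a) / d < real n"
    using reals_Archimedean2 by blast
  have "0 \<le> (b - a) / d" using ab d by simp
  with n have n_pos: "n > 0" by (intro gr0I) auto
  define x where "x i = a + real i * (b - a) / real n" for i :: nat
  have x_step: "x (Suc i) - x i < d" for i
  proof -
    have "x (Suc i) - x i = (b - a) / real n" using n_pos by (simp add: x_def field_simps)
    also have "\<dots> < d" using n n_pos d by (simp add: field_simps)
    finally show ?thesis .
  qed
  have x_ge: "a \<le> x i" for i using ab by (simp add: x_def)
  have x_mono: "x i \<le> x (Suc i)" for i using ab n_pos by (simp add: x_def field_simps)
  have x_le: "x i \<le> b" if "i \<le> n" for i
  proof -
    have "real i * (b - a) / real n \<le> real n * (b - a) / real n"
      using that ab by (intro divide_right_mono mult_right_mono) auto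
    then show ?thesis using n_pos by (simp add: x_def)
  qed
  have "norm (Q (x i) - Q a) \<le> c * integral {a..x i} w" if "i \<le> n" for i
    using that
  proof (induction i)
    case 0
    then show ?case by (simp add: x_def)
  next
    case (Suc i)
    have "w integrable_on {a..x (Suc i)}"
      using integrable_subinterval_real[OF w] x_le[OF Suc.prems] by auto
    then have split: "integral {a..x i} w + integral {x i..x (Suc i)} w = integral {a..x (Suc i)} w"
      by (rule Henstock_Kurzweil_Integration.integral_combine[OF x_ge x_mono])
    have "norm (Q (x (Suc i)) - Q a) \<le> norm (Q (x (Suc i)) - Q (x i)) + norm (Q (x i) - Q a)"
      by (rule norm_diff_triangle_le[where y = "Q (x i)"]) auto
    also have "\<dots> \<le> c * integral {x i..x (Suc i)} w + c * integral {a..x i} w"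
      using local[OF x_ge x_mono x_le[OF Suc.prems] x_step] Suc by auto
    also have "\<dots> = c * integral {a..x (Suc i)} w"
      using split by (metis add.commute distrib_left)
    finally show ?case .
  qed
  from this[of n] show ?thesis using n_pos by (simp add: x_def)
qed

lemma eq_if_increments_small:
  fixes Q :: "real \<Rightarrow> 'a::real_normed_vector" and w :: "real \<Rightarrow> real"
  assumes ab: "a \<le> b" and w: "w integrable_on {a..b}"
    and small: "\<And>e. e > 0 \<Longrightarrow> \<exists>d>0. \<forall>s t. a \<le> s \<longrightarrow> s \<le> t \<longrightarrow> t \<le> b \<longrightarrow> t - s < d
                  \<longrightarrow> norm (Q t - Q s) \<le> e * integral {s..t} w"
  shows "Q b = Q a"
proof -
  have bound: "norm (Q b - Q a) \<le> e * \<bar>integral {a..b} w\<bar>" if e: "e > 0" for e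
  proof -
    obtain d where "d > 0" and "\<forall>s t. a \<le> s \<longrightarrow> s \<le> t \<longrightarrow> t \<le> b \<longrightarrow> t - s < d
                  \<longrightarrow> norm (Q t - Q s) \<le> e * integral {s..t} w"
      using small[OF e] by blast
    then have "norm (Q b - Q a) \<le> e * integral {a..b} w"
      by (intro norm_increment_le_integral_if_local[OF ab w]) auto
    also have "\<dots> \<le> e * \<bar>integral {a..b} w\<bar>" using e by (simp add: mult_left_mono)
    finally show ?thesis .
  qed
  have "norm (Q b - Q a) \<le> 0"
  proof (rule ccontr)
    define D where "D = norm (Q b - Q a)"
    assume "\<not> norm (Q b - Q a) \<le> 0"
    then have D: "D > 0" by (simp add: D_def)
    have "D \<le> D / (\<bar>integral {a..b} w\<bar> + 1) * \<bar>integral {a..b} w\<bar>"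
      using bound[of "D / (\<bar>integral {a..b} w\<bar> + 1)"] D by (simp add: D_def add_pos_nonneg)
    also have "\<dots> < D" using D by (simp add: field_simps)
    finally show False by simp
  qed
  then show ?thesis by simp
qed

lemma norm_has_integral_le_integral:
  fixes f :: "'n::euclidean_space \<Rightarrow> 'a::banach"
  assumes f: "(f has_integral i) S" and w: "w integrable_on S"
    and le: "\<And>x. x \<in> S \<Longrightarrow> norm (f x) \<le> c * w x"
  shows "norm i \<le> c * integral S w"
proof -
  have "norm (integral S f) \<le> integral S (\<lambda>x. c * w x)"
    using f w le by (intro integral_norm_bound_integral integrable_on_mult_right) auto
  then show ?thesis using f by (simp add: integral_unique)
qed

lemma indefinite_integral_increment:
  fixes f F :: "real \<Rightarrow> 'a::euclidean_space"
  assumes f: "f integrable_on {a..b}"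
    and F: "\<And>x. x \<in> {a..b} \<Longrightarrow> F x = F a + integral {a..x} f"
    and st: "a \<le> s" "s \<le> t" "t \<le> b"
  shows "F t - F s = integral {s..t} f"
proof -
  have "integral {a..s} f + integral {s..t} f = integral {a..t} f"
    by (rule Henstock_Kurzweil_Integration.integral_combine)
      (use st integrable_subinterval_real[OF f] in auto)
  then show ?thesis using F[of s] F[of t] st by (auto simp: algebra_simps)
qed

lemma continuous_on_indefinite_integral:
  fixes f F :: "real \<Rightarrow> 'a::euclidean_space"
  assumes f: "f integrable_on {a..b}"
    and F: "\<And>x. x \<in> {a..b} \<Longrightarrow> F x = F a + integral {a..x} f"
  shows "continuous_on {a..b} F"
proof -
  have "continuous_on {a..b} (\<lambda>x. F a + integral {a..x} f)"
    by (intro continuous_intros indefinite_integral_continuous_1 f)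
  then show ?thesis by (rule continuous_on_eq) (metis F)
qed

lemma absolutely_integrable_continuous_mult:
  fixes f G :: "real \<Rightarrow> 'a::{real_normed_field,euclidean_space}"
  assumes G: "continuous_on {a..b} G" and f: "f absolutely_integrable_on {a..b}"
  shows "(\<lambda>t. G t * f t) absolutely_integrable_on {a..b}"
proof (rule absolutely_integrable_bounded_measurable_product[OF bilinear_times _ _ _ f])
  show "G \<in> borel_measurable (lebesgue_on {a..b})"
    by (rule continuous_imp_measurable_on_sets_lebesgue[OF G]) auto
  show "bounded (G ` {a..b})"
    by (rule compact_imp_bounded, rule compact_continuous_image[OF G]) auto
qed auto

lemma absolutely_integrable_mult_continuous:
  fixes f G :: "real \<Rightarrow> 'a::{real_normed_field,euclidean_space}"
  assumes f: "f absolutely_integrable_on {a..b}" and G: "continuous_on {a..b} G"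
  shows "(\<lambda>t. f t * G t) absolutely_integrable_on {a..b}"
  using absolutely_integrable_continuous_mult[OF G f] by (simp add: mult.commute)

text \<open>A substitute for the fundamental theorem of calculus that needs no derivatives: it suffices
  that \<open>H\<close> is approximated by the integrals of \<open>h\<close> to first order in the integrals of some \<open>w\<close>.\<close>

lemma has_integral_if_increments_approximated:
  fixes h H :: "real \<Rightarrow> 'a::euclidean_space" and w :: "real \<Rightarrow> real"
  assumes ab: "a \<le> b" and h: "h integrable_on {a..b}" and w: "w integrable_on {a..b}"
    and approx: "\<And>e. e > 0 \<Longrightarrow> \<exists>d>0. \<forall>s t. a \<le> s \<longrightarrow> s \<le> t \<longrightarrow> t \<le> b \<longrightarrow> t - s < d
                  \<longrightarrow> norm (H t - H s - integral {s..t} h) \<le> e * integral {s..t} w"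
  shows "(h has_integral (H b - H a)) {a..b}"
proof -
  define Q where "Q x = H x - integral {a..x} h" for x
  have Q_increment: "Q t - Q s = H t - H s - integral {s..t} h"
    if "a \<le> s" "s \<le> t" "t \<le> b" for s t
  proof -
    have combine: "integral {a..s} h + integral {s..t} h = integral {a..t} h"
      by (rule Henstock_Kurzweil_Integration.integral_combine)
        (use that integrable_subinterval_real[OF h] in auto)
    show ?thesis by (simp add: Q_def algebra_simps flip: combine)
  qed
  have "Q b = Q a"
  proof (rule eq_if_increments_small[OF ab w])
    fix e :: real assume "e > 0"
    then show "\<exists>d>0. \<forall>s t. a \<le> s \<longrightarrow> s \<le> t \<longrightarrow> t \<le> b \<longrightarrow> t - s < d
                  \<longrightarrow> norm (Q t - Q s) \<le> e * integral {s..t} w"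
      using approx by (simp add: Q_increment)
  qed
  then have "integral {a..b} h = H b - H a"
    by (simp add: Q_def eq_diff_eq diff_eq_eq add.commute)
  then show ?thesis using integrable_integral[OF h] by simp
qed

lemma norm_product_increment_le:
  fixes f g F G :: "real \<Rightarrow> 'a::{real_normed_field,euclidean_space}"
  assumes f: "f integrable_on {s..t}" and g: "g integrable_on {s..t}"
    and h: "(\<lambda>r. f r * G r + F r * g r) integrable_on {s..t}"
    and w: "(\<lambda>r. norm (f r) + norm (g r)) integrable_on {s..t}"
    and F_increment: "F t - F s = integral {s..t} f" and G_increment: "G t - G s = integral {s..t} g"
    and F_close: "\<And>r. r \<in> {s..t} \<Longrightarrow> norm (F s - F r) \<le> e"
    and G_close: "\<And>r. r \<in> {s..t} \<Longrightarrow> norm (G t - G r) \<le> e"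
  shows "norm (F t * G t - F s * G s - integral {s..t} (\<lambda>r. f r * G r + F r * g r))
    \<le> e * integral {s..t} (\<lambda>r. norm (f r) + norm (g r))"
proof -
  have "((\<lambda>r. f r * G t + F s * g r - (f r * G r + F r * g r)) has_integral
      ((F t - F s) * G t + F s * (G t - G s) - integral {s..t} (\<lambda>r. f r * G r + F r * g r))) {s..t}"
    unfolding F_increment G_increment
    by (intro has_integral_diff has_integral_add has_integral_mult_left has_integral_mult_right
        integrable_integral f g h)
  then have "((\<lambda>r. f r * (G t - G r) + (F s - F r) * g r) has_integral
      (F t * G t - F s * G s - integral {s..t} (\<lambda>r. f r * G r + F r * g r))) {s..t}"
    by (simp add: algebra_simps)
  then show ?thesis
  proof (rule norm_has_integral_le_integral[OF _ w])
    fix r assume r: "r \<in> {s..t}"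
    have "norm (f r * (G t - G r)) + norm ((F s - F r) * g r) \<le> norm (f r) * e + e * norm (g r)"
      unfolding norm_mult using F_close[OF r] G_close[OF r]
      by (intro add_mono mult_left_mono mult_right_mono) auto
    also have "\<dots> = e * (norm (f r) + norm (g r))" by (simp add: algebra_simps)
    finally show "norm (f r * (G t - G r) + (F s - F r) * g r) \<le> e * (norm (f r) + norm (g r))"
      by (meson norm_triangle_ineq order_trans)
  qed
qed

lemma has_integral_product_rule:
  fixes f g F G :: "real \<Rightarrow> 'a::{real_normed_field,euclidean_space}"
  assumes ab: "a \<le> b"
    and f: "f absolutely_integrable_on {a..b}" and g: "g absolutely_integrable_on {a..b}"
    and F: "\<And>x. x \<in> {a..b} \<Longrightarrow> F x = F a + integral {a..x} f"
    and G: "\<And>x. x \<in> {a..b} \<Longrightarrow> G x = G a + integral {a..x} g"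
  shows "((\<lambda>t. f t * G t + F t * g t) has_integral (F b * G b - F a * G a)) {a..b}"
proof -
  have fi: "f integrable_on {a..b}" and gi: "g integrable_on {a..b}"
    and wi: "(\<lambda>t. norm (f t) + norm (g t)) integrable_on {a..b}"
    using f g by (auto simp: absolutely_integrable_on_def intro: integrable_add)
  have Fc: "continuous_on {a..b} F" and Gc: "continuous_on {a..b} G"
    using continuous_on_indefinite_integral fi F gi G by blast+
  have "(\<lambda>t. f t * G t + F t * g t) absolutely_integrable_on {a..b}"
    by (intro set_integral_add(1) absolutely_integrable_mult_continuous
        absolutely_integrable_continuous_mult f g Fc Gc)
  then have hi: "(\<lambda>t. f t * G t + F t * g t) integrable_on {a..b}"
    by (simp add: absolutely_integrable_on_def)
  show ?thesis
  proof (rule has_integral_if_increments_approximated[OF ab hi wi])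
    fix e :: real assume e: "e > 0"
    obtain d1 where d1: "d1 > 0" and dF: "\<And>r s. r \<in> {a..b} \<Longrightarrow> s \<in> {a..b} \<Longrightarrow> dist s r < d1
        \<Longrightarrow> dist (F s) (F r) < e"
      using uniformly_continuous_onE[OF compact_uniformly_continuous[OF Fc compact_Icc] e] by metis
    obtain d2 where d2: "d2 > 0" and dG: "\<And>r s. r \<in> {a..b} \<Longrightarrow> s \<in> {a..b} \<Longrightarrow> dist s r < d2
        \<Longrightarrow> dist (G s) (G r) < e"
      using uniformly_continuous_onE[OF compact_uniformly_continuous[OF Gc compact_Icc] e] by metis
    show "\<exists>d>0. \<forall>s t. a \<le> s \<longrightarrow> s \<le> t \<longrightarrow> t \<le> b \<longrightarrow> t - s < d \<longrightarrow>
        norm (F t * G t - F s * G s - integral {s..t} (\<lambda>r. f r * G r + F r * g r))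
          \<le> e * integral {s..t} (\<lambda>t. norm (f t) + norm (g t))"
    proof (intro exI[of _ "min d1 d2"] conjI allI impI)
      fix s t assume st: "a \<le> s" "s \<le> t" "t \<le> b" "t - s < min d1 d2"
      have sub: "{s..t} \<subseteq> {a..b}" using st by auto
      show "norm (F t * G t - F s * G s - integral {s..t} (\<lambda>r. f r * G r + F r * g r))
          \<le> e * integral {s..t} (\<lambda>t. norm (f t) + norm (g t))"
      proof (rule norm_product_increment_le)
        show "F t - F s = integral {s..t} f" "G t - G s = integral {s..t} g"
          using indefinite_integral_increment[OF fi F st(1-3)]
            indefinite_integral_increment[OF gi G st(1-3)] by auto
        show "norm (F s - F r) \<le> e" "norm (G t - G r) \<le> e" if "r \<in> {s..t}" for r
          using dF[of r s] dG[of r t] that st sub by (auto simp: dist_norm dist_real_def)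
      qed (use integrable_subinterval_real[OF _ sub] fi gi hi wi in auto)
    qed (use d1 d2 in auto)
  qed
qed

lemma norm_exp_minus_one_minus_le:
  fixes z :: "'a::{real_normed_field,banach}"
  assumes "norm z \<le> 1"
  shows "norm (exp z - 1 - z) \<le> exp 1 * norm z ^ 2"
proof -
  have "norm (exp z - (1 + z)) \<le> exp (norm z) * norm z ^ 2"
    using Taylor_exp_field[of z 1] by (simp add: numeral_2_eq_2)
  also have "\<dots> \<le> exp 1 * norm z ^ 2"
    using assms by (intro mult_right_mono) auto
  finally show ?thesis by (simp add: diff_diff_eq)
qed

lemma norm_exp_increment_le:
  fixes f F :: "real \<Rightarrow> 'a::{real_normed_field,euclidean_space}"
  assumes f: "f integrable_on {s..t}" and h: "(\<lambda>r. exp (F r) * f r) integrable_on {s..t}"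
    and w: "(\<lambda>r. norm (f r)) integrable_on {s..t}"
    and F_increment: "F t - F s = integral {s..t} f" and F_small: "norm (F t - F s) \<le> 1"
    and exp_close: "\<And>r. r \<in> {s..t} \<Longrightarrow> norm (exp (F s) - exp (F r)) \<le> e"
  shows "norm (exp (F t) - exp (F s) - integral {s..t} (\<lambda>r. exp (F r) * f r))
    \<le> (e + exp 1 * norm (exp (F s)) * norm (F t - F s)) * integral {s..t} (\<lambda>r. norm (f r))"
proof -
  define dd where "dd = F t - F s"
  have dd_le: "norm dd \<le> integral {s..t} (\<lambda>r. norm (f r))"
    unfolding dd_def F_increment by (rule integral_norm_bound_integral[OF f w]) auto
  text \<open>Freezing \<open>exp (F r)\<close> at \<open>r = s\<close> leaves the quadratic Taylor remainder of \<open>exp\<close>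
    at \<open>dd\<close> and an integral with a uniformly small factor.\<close>
  have "((\<lambda>r. exp (F s) * f r - exp (F r) * f r) has_integral
      (exp (F s) * dd - integral {s..t} (\<lambda>r. exp (F r) * f r))) {s..t}"
    unfolding dd_def F_increment
    by (intro has_integral_diff has_integral_mult_right integrable_integral f h)
  moreover have "exp (F t) = exp (F s) * exp dd"
    by (simp add: dd_def flip: exp_add)
  ultimately have remainder: "((\<lambda>r. (exp (F s) - exp (F r)) * f r) has_integral
      (exp (F t) - exp (F s) - integral {s..t} (\<lambda>r. exp (F r) * f r)
        - exp (F s) * (exp dd - 1 - dd))) {s..t}"
    by (simp add: algebra_simps)
  have "norm (exp (F t) - exp (F s) - integral {s..t} (\<lambda>r. exp (F r) * f r)
      - exp (F s) * (exp dd - 1 - dd)) \<le> e * integral {s..t} (\<lambda>r. norm (f r))"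
  proof (rule norm_has_integral_le_integral[OF remainder w])
    fix r assume "r \<in> {s..t}"
    then show "norm ((exp (F s) - exp (F r)) * f r) \<le> e * norm (f r)"
      unfolding norm_mult using exp_close by (intro mult_right_mono) auto
  qed
  moreover have "norm (exp (F s) * (exp dd - 1 - dd))
      \<le> exp 1 * norm (exp (F s)) * norm dd * integral {s..t} (\<lambda>r. norm (f r))"
  proof -
    have "norm (exp (F s) * (exp dd - 1 - dd)) \<le> norm (exp (F s)) * (exp 1 * norm dd ^ 2)"
      unfolding norm_mult using F_small
      by (intro mult_left_mono norm_exp_minus_one_minus_le) (auto simp: dd_def)
    also have "\<dots> \<le> exp 1 * norm (exp (F s)) * norm dd * integral {s..t} (\<lambda>r. norm (f r))"
      using dd_le by (simp add: power2_eq_square mult_left_mono mult_ac)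
    finally show ?thesis .
  qed
  ultimately show ?thesis
    using norm_triangle_sub[of "exp (F t) - exp (F s) - integral {s..t} (\<lambda>r. exp (F r) * f r)"
        "exp (F s) * (exp dd - 1 - dd)"]
    by (simp add: dd_def algebra_simps)
qed

lemma has_integral_exp_rule:
  fixes f F :: "real \<Rightarrow> 'a::{real_normed_field,euclidean_space}"
  assumes ab: "a \<le> b" and f: "f absolutely_integrable_on {a..b}"
    and F: "\<And>x. x \<in> {a..b} \<Longrightarrow> F x = F a + integral {a..x} f"
  shows "((\<lambda>t. exp (F t) * f t) has_integral (exp (F b) - exp (F a))) {a..b}"
proof -
  have fi: "f integrable_on {a..b}" and wi: "(\<lambda>t. norm (f t)) integrable_on {a..b}"
    using f by (auto simp: absolutely_integrable_on_def)
  have Fc: "continuous_on {a..b} F"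
    by (rule continuous_on_indefinite_integral[OF fi F])
  have EFc: "continuous_on {a..b} (\<lambda>t. exp (F t))"
    by (intro continuous_intros Fc)
  have hi: "(\<lambda>t. exp (F t) * f t) integrable_on {a..b}"
    using absolutely_integrable_continuous_mult[OF EFc f] by (simp add: absolutely_integrable_on_def)
  obtain B where B: "B > 0" "\<And>x. x \<in> {a..b} \<Longrightarrow> norm (exp (F x)) \<le> B"
    using compact_imp_bounded[OF compact_continuous_image[OF EFc compact_Icc]]
    unfolding bounded_pos by auto
  show ?thesis
  proof (rule has_integral_if_increments_approximated[OF ab hi wi])
    fix e :: real assume e: "e > 0"
    define e1 where "e1 = min 1 (e / (2 * B * exp 1))"
    have e1: "e1 > 0" "e1 \<le> 1" "exp 1 * B * e1 \<le> e / 2"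
      using e B by (auto simp: e1_def min_def field_simps)
    obtain d1 where d1: "d1 > 0" and dF: "\<And>r s. r \<in> {a..b} \<Longrightarrow> s \<in> {a..b} \<Longrightarrow> dist s r < d1
        \<Longrightarrow> dist (F s) (F r) < e1"
      using uniformly_continuous_onE[OF compact_uniformly_continuous[OF Fc compact_Icc] e1(1)] by metis
    obtain d2 where d2: "d2 > 0" and dE: "\<And>r s. r \<in> {a..b} \<Longrightarrow> s \<in> {a..b} \<Longrightarrow> dist s r < d2
        \<Longrightarrow> dist (exp (F s)) (exp (F r)) < e / 2"
      using uniformly_continuous_onE[OF compact_uniformly_continuous[OF EFc compact_Icc], of "e / 2"] e
      by (metis half_gt_zero)
    show "\<exists>d>0. \<forall>s t. a \<le> s \<longrightarrow> s \<le> t \<longrightarrow> t \<le> b \<longrightarrow> t - s < d \<longrightarrow>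
        norm (exp (F t) - exp (F s) - integral {s..t} (\<lambda>r. exp (F r) * f r))
          \<le> e * integral {s..t} (\<lambda>t. norm (f t))"
    proof (intro exI[of _ "min d1 d2"] conjI allI impI)
      fix s t assume st: "a \<le> s" "s \<le> t" "t \<le> b" "t - s < min d1 d2"
      have sub: "{s..t} \<subseteq> {a..b}" using st by auto
      have wi': "(\<lambda>t. norm (f t)) integrable_on {s..t}"
        by (rule integrable_subinterval_real[OF wi sub])
      have F_small: "norm (F t - F s) \<le> e1"
        using dF[of s t] st by (simp add: dist_norm)
      have "norm (exp (F t) - exp (F s) - integral {s..t} (\<lambda>r. exp (F r) * f r))
          \<le> (e / 2 + exp 1 * norm (exp (F s)) * norm (F t - F s)) * integral {s..t} (\<lambda>t. norm (f t))"
      proof (rule norm_exp_increment_le)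
        show "F t - F s = integral {s..t} f"
          by (rule indefinite_integral_increment[OF fi F st(1-3)])
        show "norm (exp (F s) - exp (F r)) \<le> e / 2" if "r \<in> {s..t}" for r
          using dE[of r s] that st sub by (auto simp: dist_norm dist_real_def)
      qed (use integrable_subinterval_real[OF _ sub] fi hi wi' F_small e1 in auto)
      also have "\<dots> \<le> e * integral {s..t} (\<lambda>t. norm (f t))"
      proof (rule mult_right_mono)
        have "exp 1 * norm (exp (F s)) * norm (F t - F s) \<le> exp 1 * B * e1"
          using B st F_small by (intro mult_mono) auto
        then show "e / 2 + exp 1 * norm (exp (F s)) * norm (F t - F s) \<le> e"
          using e1(3) by linarith
      qed (use wi' in \<open>auto intro: integral_nonneg\<close>)
      finally show "norm (exp (F t) - exp (F s) - integral {s..t} (\<lambda>r. exp (F r) * f r))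
          \<le> e * integral {s..t} (\<lambda>t. norm (f t))" .
    qed (use d1 d2 in auto)
  qed
qed

lemma exp_indefinite_integral:
  fixes f F :: "real \<Rightarrow> 'a::{real_normed_field,euclidean_space}"
  assumes f: "f absolutely_integrable_on {a..b}"
    and F: "\<And>x. x \<in> {a..b} \<Longrightarrow> F x = F a + integral {a..x} f"
    and x: "x \<in> {a..b}"
  shows "exp (F x) = exp (F a) + integral {a..x} (\<lambda>t. exp (F t) * f t)"
proof -
  have "((\<lambda>t. exp (F t) * f t) has_integral (exp (F x) - exp (F a))) {a..x}"
  proof (rule has_integral_exp_rule)
    show "f absolutely_integrable_on {a..x}"
      using absolutely_integrable_on_subinterval[OF f] x by auto
    show "F y = F a + integral {a..y} f" if "y \<in> {a..x}" for y
      using F[of y] that x by auto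
  qed (use x in auto)
  then show ?thesis by (simp add: integral_unique)
qed

lemma gronwall_integral:
  fixes \<phi> k :: "real \<Rightarrow> real"
  assumes ab: "a \<le> b" and \<phi>: "continuous_on {a..b} \<phi>" and k: "k absolutely_integrable_on {a..b}"
    and k_nonneg: "\<And>t. t \<in> {a..b} \<Longrightarrow> 0 \<le> k t" and C: "0 \<le> C"
    and le: "\<And>y. y \<in> {a..b} \<Longrightarrow> \<phi> y \<le> D + C * integral {a..y} (\<lambda>t. k t * \<phi> t)"
  shows "\<phi> b \<le> D * exp (C * integral {a..b} k)"
proof -
  define \<psi> where "\<psi> y = D + C * integral {a..y} (\<lambda>t. k t * \<phi> t)" for y
  define K where "K y = - C * integral {a..y} k" for y
  have k\<phi>: "(\<lambda>t. C * (k t * \<phi> t)) absolutely_integrable_on {a..b}"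
    by (intro set_integrable_mult_right absolutely_integrable_mult_continuous k \<phi>)
  have Ck: "(\<lambda>t. - C * k t) absolutely_integrable_on {a..b}"
    by (intro set_integrable_mult_right k)
  have \<psi>_integral: "\<psi> y = \<psi> a + integral {a..y} (\<lambda>t. C * (k t * \<phi> t))" if "y \<in> {a..b}" for y
    using integrable_subinterval_real[of _ a b a y] k\<phi> that
    by (simp add: \<psi>_def absolutely_integrable_on_def)
  have K_integral: "K y = K a + integral {a..y} (\<lambda>t. - C * k t)" if "y \<in> {a..b}" for y
    using integrable_subinterval_real[of _ a b a y] k that
    by (simp add: K_def absolutely_integrable_on_def)
  have "continuous_on {a..b} K"
    by (rule continuous_on_indefinite_integral[OF _ K_integral])
      (use Ck in \<open>simp add: absolutely_integrable_on_def\<close>)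
  then have expK: "(\<lambda>t. exp (K t) * (- C * k t)) absolutely_integrable_on {a..b}"
    by (intro absolutely_integrable_continuous_mult Ck continuous_intros)
  have "((\<lambda>t. C * (k t * \<phi> t) * exp (K t) + \<psi> t * (exp (K t) * (- C * k t))) has_integral
      (\<psi> b * exp (K b) - \<psi> a * exp (K a))) {a..b}"
    by (rule has_integral_product_rule[OF ab k\<phi> expK \<psi>_integral
          exp_indefinite_integral[OF Ck K_integral]])
  then have "\<psi> b * exp (K b) - \<psi> a * exp (K a) \<le> 0"
  proof (rule has_integral_le[OF _ has_integral_0])
    fix t assume t: "t \<in> {a..b}"
    have "C * (k t * \<phi> t) * exp (K t) + \<psi> t * (exp (K t) * (- C * k t))
        = (C * k t * exp (K t)) * (\<phi> t - \<psi> t)"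
      by (simp add: algebra_simps)
    also have "\<dots> \<le> 0"
      using le[OF t] C k_nonneg[OF t] by (intro mult_nonneg_nonpos) (auto simp: \<psi>_def)
    finally show "C * (k t * \<phi> t) * exp (K t) + \<psi> t * (exp (K t) * (- C * k t)) \<le> 0" .
  qed
  then have "\<psi> b \<le> D * exp (- K b)"
    by (simp add: \<psi>_def K_def exp_minus field_simps)
  moreover have "\<phi> b \<le> \<psi> b" using le[of b] ab by (simp add: \<psi>_def)
  ultimately show ?thesis by (simp add: K_def)
qed

lemma has_integral_variation_of_constants:
  fixes l c z :: "real \<Rightarrow> 'a::{real_normed_field,euclidean_space}"
  assumes ab: "a \<le> b" and l: "l absolutely_integrable_on {a..b}"
    and lzc: "(\<lambda>t. l t * z t + c t) absolutely_integrable_on {a..b}"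
    and z: "\<And>s. s \<in> {a..b} \<Longrightarrow> ((\<lambda>t. l t * z t + c t) has_integral (z s - z a)) {a..s}"
  shows "((\<lambda>t. exp (- integral {a..t} l) * c t) has_integral
          (exp (- integral {a..b} l) * z b - z a)) {a..b}"
proof -
  define L where "L s = - integral {a..s} l" for s
  have ml: "(\<lambda>t. - l t) absolutely_integrable_on {a..b}"
    using set_integrable_mult_right[OF l, of "- 1"] by simp
  have L_integral: "L s = L a + integral {a..s} (\<lambda>t. - l t)" if "s \<in> {a..b}" for s
    by (simp add: L_def)
  have "continuous_on {a..b} L"
    by (rule continuous_on_indefinite_integral[OF _ L_integral])
      (use ml in \<open>simp add: absolutely_integrable_on_def\<close>)
  then have expL: "(\<lambda>t. exp (L t) * - l t) absolutely_integrable_on {a..b}"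
    by (intro absolutely_integrable_continuous_mult ml continuous_intros)
  have z_integral: "z s = z a + integral {a..s} (\<lambda>t. l t * z t + c t)" if "s \<in> {a..b}" for s
    using z[OF that] by (simp add: integral_unique)
  have "((\<lambda>t. exp (L t) * - l t * z t + exp (L t) * (l t * z t + c t)) has_integral
      (exp (L b) * z b - exp (L a) * z a)) {a..b}"
    by (rule has_integral_product_rule[OF ab expL lzc exp_indefinite_integral[OF ml L_integral]
          z_integral])
  then show ?thesis by (simp add: L_def algebra_simps)
qed

lemma norm_le_variation_of_constants:
  fixes l c z :: "real \<Rightarrow> complex" and w :: "real \<Rightarrow> real"
  assumes ab: "a \<le> b" and l: "l absolutely_integrable_on {a..b}"
    and lzc: "(\<lambda>t. l t * z t + c t) absolutely_integrable_on {a..b}"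
    and z: "\<And>s. s \<in> {a..b} \<Longrightarrow> ((\<lambda>t. l t * z t + c t) has_integral (z s - z a)) {a..s}"
    and w: "w integrable_on {a..b}"
    and c_le: "\<And>t. t \<in> {a..b} \<Longrightarrow> exp (- Re (integral {a..t} l)) * norm (c t) \<le> w t"
  shows "exp (- Re (integral {a..b} l)) * norm (z b) \<le> norm (z a) + integral {a..b} w"
proof -
  have "exp (- Re (integral {a..b} l)) * norm (z b) = norm (z a + (exp (- integral {a..b} l) * z b - z a))"
    by (simp add: norm_mult norm_exp_eq_Re)
  also have "\<dots> \<le> norm (z a) + norm (exp (- integral {a..b} l) * z b - z a)"
    by (rule norm_triangle_ineq)
  also have "norm (exp (- integral {a..b} l) * z b - z a) \<le> 1 * integral {a..b} w"
  proof (rule norm_has_integral_le_integral[OF has_integral_variation_of_constants[OF ab l lzc z] w])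
    fix t assume "t \<in> {a..b}"
    then show "norm (exp (- integral {a..t} l) * c t) \<le> 1 * w t"
      using c_le[of t] by (simp add: norm_mult norm_exp_eq_Re)
  qed
  finally show ?thesis by simp
qed

lemma opnorm_nonneg: "0 \<le> opnorm A"
  unfolding opnorm_def by (rule onorm_pos_le[OF matrix_vector_mul_bounded_linear])

lemma norm_matrix_vector_mult_le_opnorm: "norm (A *v v) \<le> opnorm A * norm v"
  unfolding opnorm_def by (rule onorm[OF matrix_vector_mul_bounded_linear])

lemma diag_pm_add_mult_vector_nth:
  fixes l :: complex and A :: "complex^2^2" and w :: "complex^2"
  shows "((diag_pm l + A) *v w) $ 1 = l * w $ 1 + (A *v w) $ 1"
    and "((diag_pm l + A) *v w) $ 2 = - l * w $ 2 + (A *v w) $ 2"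
  by (simp_all add: matrix_vector_mult_add_rdistrib matrix_vector_mult_def diag_pm_def sum_2
      algebra_simps)

lemma norm_vec2: "norm (w :: 'a::real_normed_vector^2) = sqrt ((norm (w $ 1))\<^sup>2 + (norm (w $ 2))\<^sup>2)"
  by (simp add: norm_vec_def L2_set_def sum_2)

lemma sqrt_sum_squares_le:
  fixes \<alpha> \<beta> c E :: real
  assumes "0 \<le> \<alpha>" "\<alpha> \<le> c" "0 \<le> \<beta>" "\<beta> \<le> E * c" "0 \<le> E"
  shows "sqrt (\<alpha>\<^sup>2 + \<beta>\<^sup>2) \<le> sqrt (1 + E\<^sup>2) * c"
proof (rule real_le_lsqrt)
  show "0 \<le> sqrt (1 + E\<^sup>2) * c" using assms by simp
  have "\<alpha>\<^sup>2 + \<beta>\<^sup>2 \<le> c\<^sup>2 + (E * c)\<^sup>2"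
    using assms by (intro add_mono power_mono) auto
  also have "\<dots> = (sqrt (1 + E\<^sup>2) * c)\<^sup>2"
    by (simp add: power_mult_distrib algebra_simps)
  finally show "\<alpha>\<^sup>2 + \<beta>\<^sup>2 \<le> (sqrt (1 + E\<^sup>2) * c)\<^sup>2" .
qed

locale perturbed_diagonal_system =
  fixes lam :: "real \<Rightarrow> complex" and R :: "real \<Rightarrow> complex^2^2"
    and u :: "real \<Rightarrow> complex^2" and M :: real
  assumes lam_loc: "\<And>x. 0 \<le> x \<Longrightarrow> lam absolutely_integrable_on {0..x}"
    and R_int: "(\<lambda>t. opnorm (R t)) integrable_on {0..}"
    and M: "\<And>x y. 0 \<le> x \<Longrightarrow> x \<le> y \<Longrightarrow> integral {x..y} (\<lambda>t. Re (lam t)) \<ge> - M"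
    and sol_int: "\<And>x. 0 \<le> x \<Longrightarrow>
       (\<lambda>t. (diag_pm (lam t) + R t) *v u t) absolutely_integrable_on {0..x}"
    and sol: "\<And>x. 0 \<le> x \<Longrightarrow>
       ((\<lambda>t. (diag_pm (lam t) + R t) *v u t) has_integral (u x - u 0)) {0..x}"
begin

definition P :: "real \<Rightarrow> real" where
  "P t = integral {0..t} (\<lambda>s. Re (lam s))"

definition weighted_norm :: "real \<Rightarrow> real" where
  "weighted_norm t = exp (- P t) * norm (u t)"

lemma P_eq_Re_integral:
  assumes "0 \<le> t"
  shows "P t = Re (integral {0..t} lam)"
proof -
  have "lam integrable_on {0..t}"
    using lam_loc[OF assms] by (simp add: absolutely_integrable_on_def)
  then show ?thesis
    unfolding P_def using integral_linear[OF _ bounded_linear_Re] by (simp add: o_def)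
qed

lemma P_diff_ge:
  assumes "0 \<le> t" "t \<le> y"
  shows "- M \<le> P y - P t"
proof -
  have "(\<lambda>s. Re (lam s)) integrable_on {0..y}"
    using lam_loc[of y] assms
    by (intro integrable_linear[OF _ bounded_linear_Re, unfolded o_def])
      (simp add: absolutely_integrable_on_def)
  then have "P y - P t = integral {t..y} (\<lambda>s. Re (lam s))"
    by (rule indefinite_integral_increment) (use assms in \<open>auto simp: P_def\<close>)
  then show ?thesis using M[OF assms] by simp
qed

lemma P_ge: "0 \<le> y \<Longrightarrow> - M \<le> P y"
  using P_diff_ge[of 0 y] by (simp add: P_def)

lemma continuous_on_u:
  assumes y: "0 \<le> y"
  shows "continuous_on {0..y} u"
proof (rule continuous_on_indefinite_integral)
  show "(\<lambda>t. (diag_pm (lam t) + R t) *v u t) integrable_on {0..y}"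
    using sol_int[OF y] by (simp add: absolutely_integrable_on_def)
  show "u x = u 0 + integral {0..x} (\<lambda>t. (diag_pm (lam t) + R t) *v u t)" if "x \<in> {0..y}" for x
    using sol[of x] that by (simp add: integral_unique)
qed

lemma continuous_on_weighted_norm: "0 \<le> y \<Longrightarrow> continuous_on {0..y} weighted_norm"
proof -
  assume y: "0 \<le> y"
  have "continuous_on {0..y} (\<lambda>t. integral {0..t} lam)"
    using lam_loc[OF y]
    by (intro indefinite_integral_continuous_1) (simp add: absolutely_integrable_on_def)
  then have "continuous_on {0..y} P"
    by (rule continuous_on_eq[OF continuous_on_compose2[OF continuous_on_Re]])
      (auto simp: P_eq_Re_integral)
  then show ?thesis
    unfolding weighted_norm_def by (intro continuous_intros continuous_on_u y)
qed

lemma opnorm_R_absolutely_integrable: "(\<lambda>t. opnorm (R t)) absolutely_integrable_on {0..y}"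
  by (intro nonnegative_absolutely_integrable_1 integrable_on_subinterval[OF R_int] opnorm_nonneg)
    auto

lemma opnorm_R_weighted_norm_integrable:
  "0 \<le> y \<Longrightarrow> (\<lambda>t. opnorm (R t) * weighted_norm t) integrable_on {0..y}"
  using absolutely_integrable_mult_continuous[OF opnorm_R_absolutely_integrable
      continuous_on_weighted_norm]
  by (simp add: absolutely_integrable_on_def)

lemma component_has_integral:
  "0 \<le> s \<Longrightarrow> ((\<lambda>t. ((diag_pm (lam t) + R t) *v u t) $ i) has_integral (u s $ i - u 0 $ i)) {0..s}"
  using has_integral_linear[OF sol bounded_linear_vec_nth[of i]] by (simp add: o_def)

lemma component_absolutely_integrable:
  "0 \<le> s \<Longrightarrow> (\<lambda>t. ((diag_pm (lam t) + R t) *v u t) $ i) absolutely_integrable_on {0..s}"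
  using absolutely_integrable_linear[OF sol_int bounded_linear_vec_nth[of i]] by (simp add: o_def)

lemma first_component_bound:
  assumes y: "0 \<le> y"
  shows "exp (- P y) * norm (u y $ 1)
    \<le> norm (u 0) + integral {0..y} (\<lambda>t. opnorm (R t) * weighted_norm t)"
proof -
  have "exp (- Re (integral {0..y} lam)) * norm (u y $ 1)
      \<le> norm (u 0 $ 1) + integral {0..y} (\<lambda>t. opnorm (R t) * weighted_norm t)"
  proof (rule norm_le_variation_of_constants[where c = "\<lambda>t. (R t *v u t) $ 1"])
    show "(\<lambda>t. lam t * u t $ 1 + (R t *v u t) $ 1) absolutely_integrable_on {0..y}"
      using component_absolutely_integrable[OF y, of 1] by (simp add: diag_pm_add_mult_vector_nth)
    show "((\<lambda>t. lam t * u t $ 1 + (R t *v u t) $ 1) has_integral (u s $ 1 - u 0 $ 1)) {0..s}"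
      if "s \<in> {0..y}" for s
      using component_has_integral[of s 1] that by (simp add: diag_pm_add_mult_vector_nth)
    show "exp (- Re (integral {0..t} lam)) * norm ((R t *v u t) $ 1) \<le> opnorm (R t) * weighted_norm t"
      if "t \<in> {0..y}" for t
    proof -
      have "norm ((R t *v u t) $ 1) \<le> opnorm (R t) * norm (u t)"
        by (rule order_trans[OF Finite_Cartesian_Product.norm_nth_le norm_matrix_vector_mult_le_opnorm])
      then show ?thesis
        using that by (simp add: weighted_norm_def P_eq_Re_integral mult_left_mono)
    qed
  qed (use y lam_loc opnorm_R_weighted_norm_integrable in auto)
  moreover have "norm (u 0 $ 1) \<le> norm (u 0)" by (rule Finite_Cartesian_Product.norm_nth_le)
  ultimately show ?thesis using y by (simp add: P_eq_Re_integral)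
qed

lemma second_component_integrating_factor_bound:
  assumes y: "0 \<le> y"
  shows "exp (P y) * norm (u y $ 2)
    \<le> norm (u 0 $ 2) + exp (2 * (M + P y)) * integral {0..y} (\<lambda>t. opnorm (R t) * weighted_norm t)"
proof -
  text \<open>With \<open>-\<lambda>\<close> in place of \<open>\<lambda>\<close> the integrating factor grows like \<open>exp (P t)\<close>, which
    is kept below \<open>exp (M + P y)\<close> by the hypothesis on \<open>M\<close>.\<close>
  have "exp (- Re (integral {0..y} (\<lambda>t. - lam t))) * norm (u y $ 2)
    \<le> norm (u 0 $ 2) + integral {0..y} (\<lambda>t. exp (2 * (M + P y)) * (opnorm (R t) * weighted_norm t))"
  proof (rule norm_le_variation_of_constants[where c = "\<lambda>t. (R t *v u t) $ 2"])
    show "(\<lambda>t. - lam t) absolutely_integrable_on {0..y}"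
      using set_integrable_mult_right[OF lam_loc[OF y], of "- 1"] by simp
    show "(\<lambda>t. - lam t * u t $ 2 + (R t *v u t) $ 2) absolutely_integrable_on {0..y}"
      using component_absolutely_integrable[OF y, of 2] by (simp add: diag_pm_add_mult_vector_nth)
    show "((\<lambda>t. - lam t * u t $ 2 + (R t *v u t) $ 2) has_integral (u s $ 2 - u 0 $ 2)) {0..s}"
      if "s \<in> {0..y}" for s
      using component_has_integral[of s 2] that by (simp add: diag_pm_add_mult_vector_nth)
    show "(\<lambda>t. exp (2 * (M + P y)) * (opnorm (R t) * weighted_norm t)) integrable_on {0..y}"
      by (intro integrable_on_mult_right opnorm_R_weighted_norm_integrable y)
    show "exp (- Re (integral {0..t} (\<lambda>t. - lam t))) * norm ((R t *v u t) $ 2)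
        \<le> exp (2 * (M + P y)) * (opnorm (R t) * weighted_norm t)"
      if t: "t \<in> {0..y}" for t
    proof -
      have "norm ((R t *v u t) $ 2) \<le> opnorm (R t) * norm (u t)"
        by (rule order_trans[OF Finite_Cartesian_Product.norm_nth_le norm_matrix_vector_mult_le_opnorm])
      moreover have "exp (P t) \<le> exp (2 * (M + P y)) * exp (- P t)"
        using P_diff_ge[of t y] t by (simp flip: exp_add)
      ultimately have "exp (P t) * norm ((R t *v u t) $ 2)
          \<le> exp (2 * (M + P y)) * exp (- P t) * (opnorm (R t) * norm (u t))"
        by (intro mult_mono) (auto intro: mult_nonneg_nonneg opnorm_nonneg)
      then show ?thesis
        using t by (simp add: P_eq_Re_integral weighted_norm_def mult_ac)
    qed
  qed (use y in auto)
  then show ?thesis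
    using y by (simp add: P_eq_Re_integral)
qed

lemma second_component_bound:
  assumes y: "0 \<le> y"
  shows "exp (- P y) * norm (u y $ 2)
    \<le> exp (2 * M) * (norm (u 0) + integral {0..y} (\<lambda>t. opnorm (R t) * weighted_norm t))"
proof -
  define J where "J = integral {0..y} (\<lambda>t. opnorm (R t) * weighted_norm t)"
  have "exp (- P y) * norm (u y $ 2) = exp (- 2 * P y) * (exp (P y) * norm (u y $ 2))"
    unfolding mult.assoc[symmetric] exp_add[symmetric]
    by (rule arg_cong[where f = "\<lambda>r. exp r * _"]) linarith
  also have "\<dots> \<le> exp (- 2 * P y) * (norm (u 0 $ 2) + exp (2 * (M + P y)) * J)"
    using second_component_integrating_factor_bound[OF y] unfolding J_def[symmetric]
    by (rule mult_left_mono) simp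
  also have "\<dots> = exp (- 2 * P y) * norm (u 0 $ 2) + exp (2 * M) * J"
    unfolding distrib_left mult.assoc[symmetric] exp_add[symmetric]
    by (rule arg_cong[where f = "\<lambda>r. _ + exp r * _"]) linarith
  also have "\<dots> \<le> exp (2 * M) * norm (u 0) + exp (2 * M) * J"
    using P_ge[OF y] by (intro add_right_mono mult_mono Finite_Cartesian_Product.norm_nth_le) auto
  finally show ?thesis by (simp add: J_def distrib_left)
qed

lemma weighted_norm_le:
  assumes y: "0 \<le> y"
  shows "weighted_norm y \<le> sqrt (1 + exp (4 * M))
    * (norm (u 0) + integral {0..y} (\<lambda>t. opnorm (R t) * weighted_norm t))"
proof -
  have "weighted_norm y = sqrt ((exp (- P y))\<^sup>2 * ((norm (u y $ 1))\<^sup>2 + (norm (u y $ 2))\<^sup>2))"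
    by (simp add: weighted_norm_def norm_vec2[of "u y"] real_sqrt_mult)
  also have "\<dots> = sqrt ((exp (- P y) * norm (u y $ 1))\<^sup>2 + (exp (- P y) * norm (u y $ 2))\<^sup>2)"
    by (simp add: power_mult_distrib distrib_left)
  also have "\<dots> \<le> sqrt (1 + (exp (2 * M))\<^sup>2)
      * (norm (u 0) + integral {0..y} (\<lambda>t. opnorm (R t) * weighted_norm t))"
    by (rule sqrt_sum_squares_le)
      (use first_component_bound[OF y] second_component_bound[OF y] in auto)
  also have "(exp (2 * M))\<^sup>2 = exp (4 * M)"
    by (simp add: power2_eq_square flip: exp_add)
  finally show ?thesis .
qed

lemma weighted_norm_gronwall:
  assumes x: "0 \<le> x"
  shows "weighted_norm x \<le> sqrt (1 + exp (4 * M)) * norm (u 0)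
    * exp (sqrt (1 + exp (4 * M)) * integral {0..x} (\<lambda>t. opnorm (R t)))"
  by (rule gronwall_integral[OF x continuous_on_weighted_norm[OF x] opnorm_R_absolutely_integrable])
    (use weighted_norm_le in \<open>auto simp: opnorm_nonneg distrib_left\<close>)

end

theorem lemma4p1:
  fixes lam :: "real \<Rightarrow> complex" and R :: "real \<Rightarrow> complex^2^2"
    and u :: "real \<Rightarrow> complex^2" and M :: real
  assumes lam_loc: "\<And>x. 0 \<le> x \<Longrightarrow> lam absolutely_integrable_on {0..x}"
    and R_meas: "R measurable_on {0..}"
    and R_int: "(\<lambda>t. opnorm (R t)) integrable_on {0..}"
    and M: "\<And>x y. 0 \<le> x \<Longrightarrow> x \<le> y \<Longrightarrow> integral {x..y} (\<lambda>t. Re (lam t)) \<ge> - M"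
    and sol_int: "\<And>x. 0 \<le> x \<Longrightarrow>
       (\<lambda>t. (diag_pm (lam t) + R t) *v u t) absolutely_integrable_on {0..x}"
    and sol: "\<And>x. 0 \<le> x \<Longrightarrow>
       ((\<lambda>t. (diag_pm (lam t) + R t) *v u t) has_integral (u x - u 0)) {0..x}"
    and x: "0 \<le> x"
  shows "norm (u x) \<le> norm (u 0) * exp (integral {0..x} (\<lambda>t. Re (lam t)))
           * sqrt (1 + exp (4 * M))
           * exp (sqrt (1 + exp (4 * M)) * integral {0..} (\<lambda>t. opnorm (R t)))"
proof -
  interpret perturbed_diagonal_system lam R u M
    using lam_loc R_int M sol_int sol by (rule perturbed_diagonal_system.intro)
  define C where "C = sqrt (1 + exp (4 * M))"
  have "integral {0..x} (\<lambda>t. opnorm (R t)) \<le> integral {0..} (\<lambda>t. opnorm (R t))"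
    using integrable_on_subinterval[OF R_int, of 0 x]
    by (intro integral_subset_le R_int) (auto simp: opnorm_nonneg)
  then have "C * norm (u 0) * exp (C * integral {0..x} (\<lambda>t. opnorm (R t)))
      \<le> C * norm (u 0) * exp (C * integral {0..} (\<lambda>t. opnorm (R t)))"
    by (intro mult_left_mono) (auto simp: C_def intro: mult_left_mono)
  with weighted_norm_gronwall[OF x]
  have weighted_norm_bound: "weighted_norm x \<le> C * norm (u 0) * exp (C * integral {0..} (\<lambda>t. opnorm (R t)))"
    unfolding C_def by linarith
  have "norm (u x) = exp (P x) * weighted_norm x"
    unfolding weighted_norm_def mult.assoc[symmetric] exp_add[symmetric] by simp
  also have "\<dots> \<le> exp (P x) * (C * norm (u 0) * exp (C * integral {0..} (\<lambda>t. opnorm (R t))))"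
    using weighted_norm_bound by (rule mult_left_mono) simp
  also have "\<dots> = norm (u 0) * exp (P x) * C * exp (C * integral {0..} (\<lambda>t. opnorm (R t)))"
    by (simp only: mult_ac)
  finally show ?thesis unfolding P_def C_def .
qed

end
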